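(* Fix probabilities $\{\pi_k\}_{k\ge1}$ with $\pi_k=\Pr(Q=k\mid Q\ge1)\ge0$. Then the function $$L(R)=\sum_{k=2}^{\infty}\pi_k\left[1-\frac{R^k-(R-1)^k}{k\,R^{k-1}}\right]$$ decreases monotonically with increasing number of RA preambles $R\ge1$.
   Context: $Q$ is the random number of user terminals transmitting an RA preamble in a frame, and $R$ is the number of allowed RA preambles; $L(R)$ is the collision-based lower bound on the timing error probability. *)

theory Defs
  imports Complex_Main
begin

text \<open>The sum is over k >= 2,
  written with index shift k = j + 2.\<close>
definition L :: "(nat \<Rightarrow> real) \<Rightarrow> nat \<Rightarrow> real" where
  "L \<pi> R = (\<Sum>j. (let k = j + 2 in
      \<pi> k * (1 - (real R ^ k - (real R - 1) ^ k) / (real k * real R ^ (k - 1)))))"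

end

theory Submission
  imports Defs
begin

text \<open>With \<open>x = 1 - 1/R\<close>, the subtracted ratio in \<open>L\<close> is the mean \<open>(1 + x + \<dots> + x^(k-1)) / k\<close>
  of a geometric progression. It lies in \<open>[0, 1]\<close> and increases with \<open>R\<close>, because \<open>x\<close> does, so
  every summand of \<open>L\<close> is dominated by \<open>\<pi> k\<close> and decreases with \<open>R\<close>.\<close>

text \<open>\<open>(R^k - (R-1)^k) / R^(k-1)\<close> is the expected number of distinct preambles chosen by \<open>k\<close>
  terminals choosing uniformly among \<open>R\<close>.\<close>
definition distinct_preamble_ratio :: "real \<Rightarrow> nat \<Rightarrow> real" where
  "distinct_preamble_ratio R k = (R ^ k - (R - 1) ^ k) / (real k * R ^ (k - 1))"

lemma distinct_preamble_ratio_eq_geometric_mean: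
  assumes "R \<noteq> 0" "k \<ge> 1"
  shows "distinct_preamble_ratio R k = (\<Sum>i<k. (1 - 1 / R) ^ i) / real k"
proof -
  define x where "x = 1 - 1 / R"
  have "R - 1 = R * x" "1 - x = 1 / R"
    using assms(1) by (simp_all add: x_def field_simps)
  then have "R ^ k - (R - 1) ^ k = R ^ k * (1 - x ^ k)"
    by (simp add: power_mult_distrib right_diff_distrib)
  also have "\<dots> = R ^ k * (1 / R) * (\<Sum>i<k. x ^ i)"
    by (simp add: one_diff_power_eq \<open>1 - x = 1 / R\<close>)
  also have "R ^ k * (1 / R) = R ^ (k - 1)"
    using assms by (simp add: power_eq_if)
  finally show ?thesis
    using assms(1) by (simp add: distinct_preamble_ratio_def x_def)
qed

lemma distinct_preamble_ratio_nonneg: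
  assumes "R \<ge> 1" "k \<ge> 1"
  shows "0 \<le> distinct_preamble_ratio R k"
  using assms by (simp add: distinct_preamble_ratio_eq_geometric_mean sum_nonneg)

lemma distinct_preamble_ratio_le_one:
  assumes "R \<ge> 1" "k \<ge> 1"
  shows "distinct_preamble_ratio R k \<le> 1"
proof -
  have "(\<Sum>i<k. (1 - 1 / R) ^ i) \<le> (\<Sum>i<k. 1)"
    using assms(1) by (intro sum_mono power_le_one) auto
  then show ?thesis
    using assms by (simp add: distinct_preamble_ratio_eq_geometric_mean)
qed

lemma distinct_preamble_ratio_mono:
  assumes "1 \<le> R1" "R1 \<le> R2" "k \<ge> 1"
  shows "distinct_preamble_ratio R1 k \<le> distinct_preamble_ratio R2 k"
proof -
  have "1 - 1 / R1 \<le> 1 - 1 / R2"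
    using assms by (simp add: frac_le)
  moreover have "0 \<le> 1 - 1 / R1"
    using assms by simp
  ultimately have "(\<Sum>i<k. (1 - 1 / R1) ^ i) \<le> (\<Sum>i<k. (1 - 1 / R2) ^ i)"
    by (intro sum_mono power_mono)
  then show ?thesis
    using assms by (simp add: distinct_preamble_ratio_eq_geometric_mean divide_right_mono)
qed

lemma summable_mult_bounded:
  fixes p a :: "nat \<Rightarrow> real"
  assumes "summable p" "\<And>j. 0 \<le> p j" "\<And>j. \<bar>a j\<bar> \<le> B"
  shows "summable (\<lambda>j. p j * a j)"
proof (rule summable_comparison_test')
  show "summable (\<lambda>j. B * p j)"
    using assms(1) by (rule summable_mult)
  show "norm (p j * a j) \<le> B * p j" for j
    using assms(2,3)[of j] by (simp add: abs_mult) (metis mult.commute mult_left_mono)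
qed

lemma suminf_weighted_mono:
  fixes p a b :: "nat \<Rightarrow> real"
  assumes "summable p" "\<And>j. 0 \<le> p j" "\<And>j. a j \<le> b j"
    and "\<And>j. \<bar>a j\<bar> \<le> B" "\<And>j. \<bar>b j\<bar> \<le> B"
  shows "(\<Sum>j. p j * a j) \<le> (\<Sum>j. p j * b j)"
  using assms by (intro suminf_le mult_left_mono summable_mult_bounded)

lemma L_eq_suminf_distinct_preamble_ratio:
  "L \<pi> R = (\<Sum>j. \<pi> (j + 2) * (1 - distinct_preamble_ratio (real R) (j + 2)))"
  by (simp add: L_def distinct_preamble_ratio_def)

theorem corollary1:
  fixes \<pi> :: "nat \<Rightarrow> real"
  assumes nonneg: "\<And>k. k \<ge> 1 \<Longrightarrow> \<pi> k \<ge> 0"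
    and prob: "(\<lambda>j. \<pi> (j + 1)) sums 1"
  shows "\<And>R1 R2. 1 \<le> R1 \<Longrightarrow> R1 \<le> R2 \<Longrightarrow> L \<pi> R2 \<le> L \<pi> R1"
proof -
  fix R1 R2 :: nat
  assume R: "1 \<le> R1" "R1 \<le> R2"
  have "summable (\<lambda>j. \<pi> (j + 1))"
    using prob by (rule sums_summable)
  then have "summable (\<lambda>j. \<pi> (j + 2))"
    using summable_ignore_initial_segment[of _ 1] by (simp add: add.commute)
  moreover have "\<bar>1 - distinct_preamble_ratio (real R) k\<bar> \<le> 1"
    if "1 \<le> R" "2 \<le> k" for R k
    using that distinct_preamble_ratio_nonneg distinct_preamble_ratio_le_one by simp
  ultimately show "L \<pi> R2 \<le> L \<pi> R1"
    unfolding L_eq_suminf_distinct_preamble_ratio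
    using R nonneg distinct_preamble_ratio_mono[of "real R1" "real R2"]
    by (intro suminf_weighted_mono[where B = 1]) auto
qed

end
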